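(* Let $p_c<q\le p\le1$. For all $x,y\in\mathbb{Z}^d$, $\mathbb{P}$-a.s., $a^q_\lambda(x,y,\omega_p)/\lambda$ is nonincreasing in $\lambda>0$ and converges to $d_{\omega_p}([x]_q,[y]_q)$ as $\lambda\to\infty$. Moreover, for all $x\in\mathbb{R}^d$, $\alpha^p_\lambda(x)/\lambda$ is nonincreasing in $\lambda>0$ and converges to $\mu^p(x)$ as $\lambda\to\infty$.
   Context: Setting: $d\ge2$, $p_c$ critical probability of Bernoulli bond percolation on $\mathbb{Z}^d$; coupling $\omega_p(e)=\mathbf 1\{U(e)>1-p\}$, $(U(e))$ i.i.d. uniform on $(0,1)$ under $\mathbb{P}$. $\mathcal{C}_\infty(\omega)$ infinite cluster, $d_\omega$ chemical distance, $[x]_q$ the $\ell^1$-closest point of $\mathcal{C}_\infty(\omega_q)$ to $x$ (deterministic tie-break). Simple random walk on open edges, $H(y)$ hitting time, $a_\lambda(x,y,\omega)=-\log E^x_\omega[e^{-\lambda H(y)}\mathbf 1\{H(y)<\infty\}]$, $a^q_\lambda(x,y,\omega_p)=a_\lambda([x]_q,[y]_q,\omega_p)$. $\alpha^p_\lambda$ the Lyapunov exponent: the norm with $(a_\lambda(0,x,\omega_p)-\alpha^p_\lambda(x))/\|x\|_1\to0$ a.s. on $\{0\in\mathcal{C}_\infty(\omega_p)\}$ along $x\in\mathcal{C}_\infty(\omega_p)$. $\mu^p$ is the time constant: the norm on $\mathbb{R}^d$ such that a.s. on $\{0\in\mathcal{C}_\infty(\omega_p)\}$, $\lim_{k\to\infty,\,kx\in\mathcal{C}_\infty(\omega_p)}d_{\omega_p}(0,kx)/k=\mu^p(x)$.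 *)

theory Defs
  imports "HOL-Probability.Probability"
begin

type_synonym 'd site = "int ^ 'd"
type_synonym 'd edge = "'d site set"
type_synonym 'd env = "'d edge \<Rightarrow> bool"

definition l1 :: "'d::finite site \<Rightarrow> int" where
  "l1 v = (\<Sum>i\<in>UNIV. \<bar>v $ i\<bar>)"

definition to_real :: "'d::finite site \<Rightarrow> real ^ 'd" where
  "to_real v = (\<chi> i. real_of_int (v $ i))"

definition Edges :: "'d::finite edge set" where
  "Edges = {{x, y} | x y. l1 (x - y) = 1}"

definition omega :: "('d edge \<Rightarrow> real) \<Rightarrow> real \<Rightarrow> 'd env" where
  "omega u p e = (u e > 1 - p)"

definition adj :: "'d::finite env \<Rightarrow> 'd site \<Rightarrow> 'd site \<Rightarrow> bool" where
  "adj w x y \<longleftrightarrow> {x, y} \<in> Edges \<and> w {x, y}"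

definition connected :: "'d::finite env \<Rightarrow> 'd site \<Rightarrow> 'd site \<Rightarrow> bool" where
  "connected w x y \<longleftrightarrow> (adj w)\<^sup>*\<^sup>* x y"

text \<open>Infinite cluster: the set of sites whose open cluster is infinite
  (a.s. for p > p_c this is the unique infinite cluster).\<close>
definition Cinf :: "'d::finite env \<Rightarrow> 'd site set" where
  "Cinf w = {x. infinite {y. connected w x y}}"

definition chem :: "'d::finite env \<Rightarrow> 'd site \<Rightarrow> 'd site \<Rightarrow> ereal" where
  "chem w x y = Inf {ereal (real n) | n. (adj w ^^ n) x y}"

text \<open>Closest point of C_inf to x in l1 distance, with a deterministic tie-break
  rule tb (tb x S picks an element of the finite nonempty set S of minimisers).\<close>
definition closest ::
  "('d site \<Rightarrow> 'd site set \<Rightarrow> 'd site) \<Rightarrow> 'd::finite env \<Rightarrow> 'd site \<Rightarrow> 'd site" where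
  "closest tb w x = tb x {z \<in> Cinf w. \<forall>v \<in> Cinf w. l1 (z - x) \<le> l1 (v - x)}"

definition deg :: "'d::finite env \<Rightarrow> 'd site \<Rightarrow> nat" where
  "deg w x = card {y. adj w x y}"

definition trans_prob :: "'d::finite env \<Rightarrow> 'd site \<Rightarrow> 'd site \<Rightarrow> real" where
  "trans_prob w x y = (if adj w x y then 1 / real (deg w x) else 0)"

text \<open>hitp w y n x = P^x_w(H(y) = n), with H(y) = inf{n >= 0. X_n = y}.\<close>
fun hitp :: "'d::finite env \<Rightarrow> 'd site \<Rightarrow> nat \<Rightarrow> 'd site \<Rightarrow> real" where
  "hitp w y 0 x = (if x = y then 1 else 0)"
| "hitp w y (Suc n) x =
     (if x = y then 0 else (\<Sum>z\<in>{z. adj w x z}. trans_prob w x z * hitp w y n z))"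

text \<open>E^x_w[exp(-lam H(y)) 1{H(y) < infinity}]\<close>
definition laplace :: "real \<Rightarrow> 'd::finite env \<Rightarrow> 'd site \<Rightarrow> 'd site \<Rightarrow> real" where
  "laplace lam w x y = (\<Sum>n. exp (- lam * real n) * hitp w y n x)"

definition a_lam :: "real \<Rightarrow> 'd::finite env \<Rightarrow> 'd site \<Rightarrow> 'd site \<Rightarrow> ereal" where
  "a_lam lam w x y = (if laplace lam w x y = 0 then \<infinity> else ereal (- ln (laplace lam w x y)))"

definition a_q ::
  "('d site \<Rightarrow> 'd site set \<Rightarrow> 'd site) \<Rightarrow> ('d edge \<Rightarrow> real) \<Rightarrow> real \<Rightarrow> real \<Rightarrow> real
     \<Rightarrow> 'd::finite site \<Rightarrow> 'd site \<Rightarrow> ereal" where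
  "a_q tb u q p lam x y =
     a_lam lam (omega u p) (closest tb (omega u q) x) (closest tb (omega u q) y)"

definition iid_uniform :: "'a measure \<Rightarrow> ('a \<Rightarrow> 'd::finite edge \<Rightarrow> real) \<Rightarrow> bool" where
  "iid_uniform M U \<longleftrightarrow> prob_space M
     \<and> prob_space.indep_vars M (\<lambda>_. borel) (\<lambda>e s. U s e) Edges
     \<and> (\<forall>e \<in> Edges. distr M borel (\<lambda>s. U s e) = uniform_measure lborel {0<..<1})"

definition p_crit :: "'a measure \<Rightarrow> ('a \<Rightarrow> 'd::finite edge \<Rightarrow> real) \<Rightarrow> real" where
  "p_crit M U = Sup {p \<in> {0..1}. measure M {s \<in> space M. 0 \<in> Cinf (omega (U s) p)} = 0}"

definition is_norm :: "(real ^ 'd \<Rightarrow> real) \<Rightarrow> bool" where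
  "is_norm f \<longleftrightarrow> (\<forall>x. 0 \<le> f x) \<and> (\<forall>x. f x = 0 \<longleftrightarrow> x = 0)
     \<and> (\<forall>c x. f (c *\<^sub>R x) = \<bar>c\<bar> * f x) \<and> (\<forall>x y. f (x + y) \<le> f x + f y)"

definition is_lyapunov ::
  "'a measure \<Rightarrow> ('a \<Rightarrow> 'd::finite edge \<Rightarrow> real) \<Rightarrow> real \<Rightarrow> real \<Rightarrow> (real ^ 'd \<Rightarrow> real) \<Rightarrow> bool" where
  "is_lyapunov M U p lam \<alpha> \<longleftrightarrow> is_norm \<alpha> \<and>
     (AE s in M. 0 \<in> Cinf (omega (U s) p) \<longrightarrow>
        (\<forall>\<epsilon>>0. \<exists>R. \<forall>x \<in> Cinf (omega (U s) p). real_of_int (l1 x) \<ge> R \<longrightarrow>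
            \<bar>a_lam lam (omega (U s) p) 0 x - ereal (\<alpha> (to_real x))\<bar>
              \<le> ereal (\<epsilon> * real_of_int (l1 x))))"

definition is_time_constant ::
  "'a measure \<Rightarrow> ('a \<Rightarrow> 'd::finite edge \<Rightarrow> real) \<Rightarrow> real \<Rightarrow> (real ^ 'd \<Rightarrow> real) \<Rightarrow> bool" where
  "is_time_constant M U p \<mu> \<longleftrightarrow> is_norm \<mu> \<and>
     (\<forall>x :: 'd site. AE s in M. 0 \<in> Cinf (omega (U s) p) \<longrightarrow>
        (\<forall>\<epsilon>>0. \<exists>K. \<forall>k::nat. k \<ge> K \<longrightarrow> 0 < k \<longrightarrow>
            (\<chi> i. int k * x $ i) \<in> Cinf (omega (U s) p) \<longrightarrow>
            \<bar>chem (omega (U s) p) 0 (\<chi> i. int k * x $ i) / ereal (real k)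
               - ereal (\<mu> (to_real x))\<bar> \<le> ereal \<epsilon>))"

end

theory Submission
  imports Defs
begin

text \<open>
  For fixed sites the random-walk estimates are deterministic. The hitting time H of y is at
  least the chemical distance d, and the walk follows a fixed geodesic with probability at
  least (2d)^(-d); hence \<lambda>d \<le> a_\<lambda> \<le> \<lambda>d + d log(2d), and a_\<lambda>/\<lambda> tends to d. Monotonicity of a_\<lambda>/\<lambda> is
  Hoelder's inequality E[e^{-\<lambda>H}] \<le> E[e^{-\<lambda>'H}]^{\<lambda>/\<lambda>'} for \<lambda> \<le> \<lambda>'.

  For the norms, fix a lattice direction z. By translation invariance of the i.i.d. weights the
  events {kz \<in> C_\<infinity>} are stationary, so with positive probability the origin and infinitely many
  multiples kz lie in the infinite cluster. Along these multiples a_\<lambda>(0,kz)/k tends to \<alpha>_\<lambda>(z)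
  and d(0,kz)/k to \<mu>(z), so the deterministic bounds pass to the limit at lattice points, and
  extend to R^d by homogeneity and continuity of norms.
\<close>

lemma l1_minus_commute: "l1 (x - y) = l1 (y - x)"
  unfolding l1_def by (rule sum.cong) (auto simp: abs_minus_commute)

lemma Edges_iff: "{x, y} \<in> Edges \<longleftrightarrow> l1 (x - y) = 1"
proof
  assume "{x, y} \<in> Edges"
  then obtain a b where "{x, y} = {a, b}" "l1 (a - b) = 1" unfolding Edges_def by blast
  then show "l1 (x - y) = 1" by (auto simp: doubleton_eq_iff l1_minus_commute)
qed (auto simp: Edges_def)

lemma l1_axis: "l1 (axis i s :: 'd::finite site) = \<bar>s\<bar>"
proof -
  have "l1 (axis i s :: 'd site) = (\<Sum>j\<in>UNIV. if j = i then \<bar>s\<bar> else 0)"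
    unfolding l1_def axis_def by (intro sum.cong) auto
  then show ?thesis by simp
qed

lemma abs_component_le_l1: "\<bar>v $ i\<bar> \<le> l1 v"
  unfolding l1_def by (rule member_le_sum) auto

lemma l1_eq_1_imp_axis:
  assumes "l1 (v :: 'd::finite site) = 1"
  obtains i s where "v = axis i s" "\<bar>s\<bar> = 1"
proof -
  obtain i where i: "v $ i \<noteq> 0"
    using assms by (metis (no_types) abs_0 l1_def sum.neutral zero_neq_one)
  have "l1 v = \<bar>v $ i\<bar> + (\<Sum>j\<in>UNIV - {i}. \<bar>v $ j\<bar>)"
    unfolding l1_def by (simp add: sum.remove[of UNIV i])
  moreover have "0 \<le> (\<Sum>j\<in>UNIV - {i}. \<bar>v $ j\<bar>)" by (rule sum_nonneg) simp
  ultimately have "(\<Sum>j\<in>UNIV - {i}. \<bar>v $ j\<bar>) = 0" "\<bar>v $ i\<bar> = 1"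
    using assms i by linarith+
  then have "\<forall>j\<in>UNIV - {i}. v $ j = 0" by (simp add: sum_nonneg_eq_0_iff)
  then have "v = axis i (v $ i)" by (auto simp: vec_eq_iff axis_def)
  then show ?thesis using that \<open>\<bar>v $ i\<bar> = 1\<close> by blast
qed

lemma neighbours_subset:
  "{y. adj w x y} \<subseteq> (\<lambda>(i, s). x - axis i s) ` (UNIV \<times> {1, -1::int})"
proof
  fix y assume "y \<in> {y. adj w x y}"
  then have "l1 (x - y) = 1" unfolding adj_def Edges_iff by blast
  then obtain i s where "x - y = axis i s" "\<bar>s\<bar> = 1" by (rule l1_eq_1_imp_axis)
  moreover from this have "y = x - axis i s" by (simp add: algebra_simps)
  ultimately show "y \<in> (\<lambda>(i, s). x - axis i s) ` (UNIV \<times> {1, -1})"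
    by (force simp: abs_if split: if_splits)
qed

lemma finite_neighbours: "finite {y. adj w (x :: 'd::finite site) y}"
  by (rule finite_subset[OF neighbours_subset]) auto

lemma deg_le: "deg w (x :: 'd::finite site) \<le> 2 * CARD('d)"
proof -
  have "deg w x \<le> card ((\<lambda>(i, s). x - axis i s) ` (UNIV \<times> {1, -1::int}))"
    unfolding deg_def by (rule card_mono[OF _ neighbours_subset]) auto
  also have "\<dots> \<le> card (UNIV \<times> {1, -1::int} :: ('d \<times> int) set)"
    by (rule card_image_le) auto
  finally show ?thesis by (simp add: card_cartesian_product)
qed

subsection \<open>Hitting probabilities and their Laplace transform\<close>

lemma hitp_nonneg: "0 \<le> hitp w y n x"
  by (induction n arbitrary: x) (auto simp: trans_prob_def intro!: sum_nonneg)

lemma sum_trans_prob_le_1: "(\<Sum>z\<in>{z. adj w x z}. trans_prob w x z) \<le> 1"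
proof (cases "deg w x = 0")
  case True
  then have "{z. adj w x z} = {}" using finite_neighbours[of w x] by (simp add: deg_def)
  then show ?thesis by simp
next
  case False
  have "(\<Sum>z\<in>{z. adj w x z}. trans_prob w x z) = (\<Sum>z\<in>{z. adj w x z}. 1 / real (deg w x))"
    by (rule sum.cong) (auto simp: trans_prob_def)
  also have "\<dots> = 1" using False by (simp add: deg_def)
  finally show ?thesis by simp
qed

lemma sum_hitp_le_1: "(\<Sum>n<N. hitp w y n x) \<le> 1"
proof (induction N arbitrary: x)
  case (Suc N)
  have shift: "(\<Sum>n<Suc N. hitp w y n x) = hitp w y 0 x + (\<Sum>n<N. hitp w y (Suc n) x)"
    by (rule sum.lessThan_Suc_shift)
  show ?case
  proof (cases "x = y")
    case False
    have "(\<Sum>n<N. hitp w y (Suc n) x)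
        = (\<Sum>z\<in>{z. adj w x z}. trans_prob w x z * (\<Sum>n<N. hitp w y n z))"
      using False by (simp add: sum_distrib_left sum.swap[of _ "{..<N}"])
    also have "\<dots> \<le> (\<Sum>z\<in>{z. adj w x z}. trans_prob w x z)"
      by (rule sum_mono, rule mult_left_le) (auto simp: trans_prob_def Suc.IH)
    finally show ?thesis using False shift sum_trans_prob_le_1[of w x] by simp
  qed (unfold shift, simp)
qed simp

lemma summable_hitp: "summable (\<lambda>n. hitp w y n x)"
  by (rule summableI_nonneg_bounded[where x = 1]) (auto intro: hitp_nonneg sum_hitp_le_1)

lemma suminf_hitp_le_1: "(\<Sum>n. hitp w y n x) \<le> 1"
  by (rule suminf_le_const[OF summable_hitp sum_hitp_le_1])

lemma summable_laplace: "0 \<le> lam \<Longrightarrow> summable (\<lambda>n. exp (- lam * real n) * hitp w y n x)"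
  by (rule summable_comparison_test'[OF summable_hitp[of w y x]])
     (simp add: hitp_nonneg mult_left_le_one_le)

lemma hitp_pos_imp_relpowp: "0 < hitp w y n x \<Longrightarrow> (adj w ^^ n) x y"
proof (induction n arbitrary: x)
  case (Suc n)
  then have "x \<noteq> y" by auto
  with Suc.prems have "(\<Sum>z\<in>{z. adj w x z}. trans_prob w x z * hitp w y n z) \<noteq> 0" by simp
  then obtain z where "adj w x z" "trans_prob w x z * hitp w y n z \<noteq> 0"
    using sum.not_neutral_contains_not_neutral by blast
  then have "adj w x z" "0 < hitp w y n z"
    using hitp_nonneg[of w y n z] by (auto simp: order_less_le)
  then show ?case using Suc.IH relpowp_Suc_I2[of "adj w"] by blast
qed (simp split: if_splits)

lemma hitp_eq_0: "\<not> (adj w ^^ n) x y \<Longrightarrow> hitp w y n x = 0"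
  using hitp_pos_imp_relpowp hitp_nonneg by (metis order_less_le)

text \<open>Each step along a geodesic has probability 1/deg \<ge> 1/(2d).\<close>

lemma hitp_ge_geodesic:
  fixes x y :: "'d::finite site"
  assumes "(adj w ^^ n) x y" "\<forall>m<n. \<not> (adj w ^^ m) x y"
  shows "(1 / (2 * real CARD('d))) ^ n \<le> hitp w y n x"
  using assms
proof (induction n arbitrary: x)
  case (Suc n)
  let ?\<delta> = "1 / (2 * real CARD('d))"
  from Suc.prems(1) obtain z where z: "adj w x z" "(adj w ^^ n) z y" by (rule relpowp_Suc_E2)
  have "x \<noteq> y" using Suc.prems(2) by auto
  have "\<forall>m<n. \<not> (adj w ^^ m) z y"
    using Suc.prems(2) z(1) relpowp_Suc_I2[of "adj w"] by blast
  with z(2) have IH: "?\<delta> ^ n \<le> hitp w y n z" by (rule Suc.IH)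
  have "0 < deg w x"
    using z(1) finite_neighbours[of w x] by (auto simp: deg_def card_gt_0_iff)
  then have \<delta>: "?\<delta> \<le> trans_prob w x z"
    using z(1) deg_le[of w x] by (simp add: trans_prob_def frac_le of_nat_le_iff[symmetric])
  have "?\<delta> ^ Suc n = ?\<delta> * ?\<delta> ^ n" by simp
  also have "\<dots> \<le> trans_prob w x z * hitp w y n z"
    by (rule mult_mono[OF \<delta> IH]) (auto simp: hitp_nonneg trans_prob_def)
  also have "\<dots> \<le> (\<Sum>z\<in>{z. adj w x z}. trans_prob w x z * hitp w y n z)"
    by (rule member_le_sum) (use z(1) finite_neighbours in \<open>auto simp: trans_prob_def hitp_nonneg\<close>)
  finally show ?case using \<open>x \<noteq> y\<close> by simp
qed simp

lemma connected_iff_relpowp: "connected w x y \<longleftrightarrow> (\<exists>n. (adj w ^^ n) x y)"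
  unfolding connected_def rtranclp_power ..

definition graph_dist :: "'d::finite env \<Rightarrow> 'd site \<Rightarrow> 'd site \<Rightarrow> nat" where
  "graph_dist w x y = (LEAST n. (adj w ^^ n) x y)"

lemma relpowp_graph_dist: "connected w x y \<Longrightarrow> (adj w ^^ graph_dist w x y) x y"
  unfolding graph_dist_def connected_iff_relpowp by (rule LeastI_ex)

lemma not_relpowp_less_graph_dist: "m < graph_dist w x y \<Longrightarrow> \<not> (adj w ^^ m) x y"
  unfolding graph_dist_def by (rule not_less_Least)

lemma chem_eq_graph_dist: "connected w x y \<Longrightarrow> chem w x y = ereal (graph_dist w x y)"
  unfolding chem_def
proof (rule antisym)
  assume "connected w x y"
  then show "Inf {ereal (real n) |n. (adj w ^^ n) x y} \<le> ereal (graph_dist w x y)"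
    by (intro Inf_lower) (auto dest: relpowp_graph_dist)
  show "ereal (graph_dist w x y) \<le> Inf {ereal (real n) |n. (adj w ^^ n) x y}"
    by (rule Inf_greatest) (auto simp: not_less[symmetric] dest: not_relpowp_less_graph_dist)
qed

lemma chem_eq_infinity: "\<not> connected w x y \<Longrightarrow> chem w x y = \<infinity>"
  unfolding chem_def connected_iff_relpowp by (simp add: top_ereal_def)

lemma laplace_eq_0: "\<not> connected w x y \<Longrightarrow> laplace lam w x y = 0"
  unfolding laplace_def connected_iff_relpowp by (simp add: hitp_eq_0)

lemma a_lam_eq_infinity: "\<not> connected w x y \<Longrightarrow> a_lam lam w x y = \<infinity>"
  unfolding a_lam_def by (simp add: laplace_eq_0)

lemma laplace_le_exp:
  assumes "0 \<le> lam"
  shows "laplace lam w x y \<le> exp (- lam * real (graph_dist w x y))"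
proof -
  let ?d = "graph_dist w x y"
  have "laplace lam w x y \<le> (\<Sum>n. exp (- lam * real ?d) * hitp w y n x)"
    unfolding laplace_def
  proof (rule suminf_le)
    fix n
    show "exp (- lam * n) * hitp w y n x \<le> exp (- lam * real ?d) * hitp w y n x"
    proof (cases "n < ?d")
      case True
      then show ?thesis by (simp add: hitp_eq_0 not_relpowp_less_graph_dist)
    next
      case False
      then show ?thesis
        using assms by (intro mult_right_mono) (auto simp: mult_left_mono hitp_nonneg)
    qed
  qed (rule summable_laplace[OF assms], rule summable_mult[OF summable_hitp])
  also have "\<dots> = exp (- lam * real ?d) * (\<Sum>n. hitp w y n x)"
    by (rule suminf_mult[OF summable_hitp])
  also have "\<dots> \<le> exp (- lam * real ?d)"
    using suminf_hitp_le_1 by (simp add: mult_left_le)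
  finally show ?thesis .
qed

lemma laplace_ge:
  fixes x y :: "'d::finite site"
  assumes "0 \<le> lam" "connected w x y"
  shows "exp (- lam * real (graph_dist w x y)) * (1 / (2 * real CARD('d))) ^ graph_dist w x y
           \<le> laplace lam w x y"
proof -
  let ?d = "graph_dist w x y"
  have "exp (- lam * real ?d) * (1 / (2 * real CARD('d))) ^ ?d \<le> exp (- lam * real ?d) * hitp w y ?d x"
    using hitp_ge_geodesic[OF relpowp_graph_dist[OF assms(2)]] not_relpowp_less_graph_dist
    by (intro mult_left_mono) auto
  also have "\<dots> \<le> laplace lam w x y"
    unfolding laplace_def
    using sum_le_suminf[OF summable_laplace[OF assms(1)], of "{?d}"]
    by (simp add: hitp_nonneg)
  finally show ?thesis .
qed

lemma ln_laplace_bounds: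
  fixes x y :: "'d::finite site"
  assumes "0 \<le> lam" "connected w x y"
  shows "0 < laplace lam w x y"
    and "lam * real (graph_dist w x y) \<le> - ln (laplace lam w x y)"
    and "- ln (laplace lam w x y) \<le> (lam + ln (2 * real CARD('d))) * real (graph_dist w x y)"
proof -
  let ?d = "graph_dist w x y" and ?\<delta> = "1 / (2 * real CARD('d))"
  have lower: "exp (- lam * real ?d) * ?\<delta> ^ ?d \<le> laplace lam w x y"
    using laplace_ge[OF assms] .
  moreover have pos: "0 < exp (- lam * real ?d) * ?\<delta> ^ ?d" by simp
  ultimately show L: "0 < laplace lam w x y" by linarith
  have "ln (laplace lam w x y) \<le> - lam * real ?d"
    using ln_mono[OF laplace_le_exp[OF assms(1)] L] by simp
  then show "lam * real ?d \<le> - ln (laplace lam w x y)" by simp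
  have "- lam * real ?d - real ?d * ln (2 * real CARD('d)) \<le> ln (laplace lam w x y)"
    using ln_mono[OF lower pos] by (simp add: ln_mult ln_realpow ln_div algebra_simps)
  then show "- ln (laplace lam w x y) \<le> (lam + ln (2 * real CARD('d))) * real ?d"
    by (simp add: algebra_simps)
qed

lemma a_lam_eq_ln_laplace:
  "0 \<le> lam \<Longrightarrow> connected w x y \<Longrightarrow> a_lam lam w x y = ereal (- ln (laplace lam w x y))"
  unfolding a_lam_def using ln_laplace_bounds(1) by fastforce

text \<open>Hoelder's inequality with exponent t = la/lb, in the form
  E[(e^{-lb H})^t] \<le> E[e^{-lb H}]^t P(H < \<infinity>)^{1-t}, proved pointwise from Young's inequality.\<close>

lemma laplace_le_powr:
  fixes x y :: "'d::finite site"
  assumes "0 < la" "la \<le> lb" "0 < laplace lb w x y"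
  shows "laplace la w x y \<le> laplace lb w x y powr (la / lb)"
proof -
  define S t where "S = laplace lb w x y" and "t = la / lb"
  have t: "0 < t" "t \<le> 1" "0 < lb" using assms by (auto simp: t_def)
  have S: "0 < S" using assms by (simp add: S_def)
  define c where "c = S powr (1 - t)"
  have c: "0 < c" using S by (simp add: c_def)
  let ?h = "\<lambda>n. hitp w y n x" and ?e = "\<lambda>n. exp (- lb * real n) * hitp w y n x"
  have young: "exp (- la * real n) \<le> (t * exp (- lb * real n) + (1 - t) * S) / c" for n
  proof -
    have "exp (- lb * real n) powr t * S powr (1 - t) \<le> t * exp (- lb * real n) + (1 - t) * S"
      by (rule Youngs_inequality_0) (use t S in auto)
    moreover have "exp (- lb * real n) powr t = exp (- la * real n)"
      using t by (simp add: powr_def t_def)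
    ultimately show ?thesis using c by (simp add: c_def pos_le_divide_eq)
  qed
  have sums: "summable ?e" "summable ?h"
    using summable_laplace[of lb] t by (auto intro: summable_hitp)
  have total: "(\<lambda>n. (t * ?e n + (1 - t) * S * ?h n) / c)
      sums ((t * S + (1 - t) * S * (\<Sum>n. ?h n)) / c)"
    unfolding S_def laplace_def by (intro sums_divide sums_add sums_mult summable_sums sums)
  have "laplace la w x y \<le> (\<Sum>n. (t * ?e n + (1 - t) * S * ?h n) / c)"
    unfolding laplace_def
  proof (rule suminf_le)
    show "exp (- la * real n) * ?h n \<le> (t * ?e n + (1 - t) * S * ?h n) / c" for n
      using mult_right_mono[OF young hitp_nonneg] by (simp add: algebra_simps)
  qed (use summable_laplace[of la] assms(1) sums_summable[OF total] in auto)
  also have "\<dots> = (t * S + (1 - t) * S * (\<Sum>n. ?h n)) / c"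
    using total by (rule sums_unique[symmetric])
  also have "\<dots> \<le> (t * S + (1 - t) * S) / c"
    using t S c suminf_hitp_le_1[of w y x]
    by (intro divide_right_mono add_left_mono mult_left_le) auto
  also have "\<dots> = S powr t" using S by (simp add: c_def powr_diff algebra_simps)
  finally show ?thesis by (simp add: S_def t_def)
qed

lemma ln_laplace_div_antimono:
  fixes x y :: "'d::finite site"
  assumes "0 < la" "la \<le> lb" "connected w x y"
  shows "- ln (laplace lb w x y) / lb \<le> - ln (laplace la w x y) / la"
proof -
  have pos: "0 < laplace la w x y" "0 < laplace lb w x y"
    using ln_laplace_bounds(1)[OF _ assms(3)] assms by auto
  have "ln (laplace la w x y) \<le> (la / lb) * ln (laplace lb w x y)"
    using ln_mono[OF laplace_le_powr[OF assms(1,2) pos(2)] pos(1)] pos by (simp add: ln_powr)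
  then show ?thesis using assms by (simp add: field_simps)
qed

lemma a_lam_div_antimono:
  fixes x y :: "'d::finite site"
  assumes "0 < la" "la \<le> lb"
  shows "a_lam lb w x y / ereal lb \<le> a_lam la w x y / ereal la"
proof (cases "connected w x y")
  case True
  then show ?thesis
    using ln_laplace_div_antimono[OF assms True] assms by (simp add: a_lam_eq_ln_laplace)
qed (use assms in \<open>simp add: a_lam_eq_infinity\<close>)

lemma tendsto_div_at_top_of_affine_bounds:
  fixes f :: "real \<Rightarrow> real"
  assumes "\<And>lam. 0 < lam \<Longrightarrow> lam * m \<le> f lam"
    and "\<And>lam. 0 < lam \<Longrightarrow> f lam \<le> (lam + C) * m"
  shows "((\<lambda>lam. f lam / lam) \<longlongrightarrow> m) at_top"
proof (rule tendsto_sandwich)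
  show "\<forall>\<^sub>F lam in at_top. m \<le> f lam / lam"
    using eventually_gt_at_top[of 0] by eventually_elim (simp add: assms(1) field_simps)
  show "\<forall>\<^sub>F lam in at_top. f lam / lam \<le> m + C * m / lam"
    using eventually_gt_at_top[of 0]
  proof eventually_elim
    case (elim lam)
    then have "f lam / lam \<le> (lam + C) * m / lam" by (simp add: assms(2) divide_right_mono)
    with elim show ?case by (simp add: field_simps)
  qed
  have "((\<lambda>lam. C * m / lam) \<longlongrightarrow> 0) at_top"
    by (rule real_tendsto_divide_at_top[OF tendsto_const filterlim_ident])
  then show "((\<lambda>lam. m + C * m / lam) \<longlongrightarrow> m) at_top"
    using tendsto_add[OF tendsto_const] by fastforce
qed simp

lemma a_lam_div_tendsto_chem:
  fixes x y :: "'d::finite site"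
  shows "((\<lambda>lam. a_lam lam w x y / ereal lam) \<longlongrightarrow> chem w x y) at_top"
proof (cases "connected w x y")
  case True
  let ?f = "\<lambda>lam. - ln (laplace lam w x y)"
  have "((\<lambda>lam. ?f lam / lam) \<longlongrightarrow> real (graph_dist w x y)) at_top"
    using ln_laplace_bounds(2,3)[OF _ True]
    by (intro tendsto_div_at_top_of_affine_bounds[where C = "ln (2 * real CARD('d))"]) auto
  then have "((\<lambda>lam. ereal (?f lam / lam)) \<longlongrightarrow> chem w x y) at_top"
    unfolding chem_eq_graph_dist[OF True] by (rule tendsto_ereal)
  moreover have "\<forall>\<^sub>F lam in at_top. ereal (?f lam / lam) = a_lam lam w x y / ereal lam"
    using eventually_gt_at_top[of 0] by eventually_elim (simp add: a_lam_eq_ln_laplace True)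
  ultimately show ?thesis by (rule Lim_transform_eventually)
next
  case False
  have "\<forall>\<^sub>F lam in at_top. \<infinity> = a_lam lam w x y / ereal lam"
    using eventually_gt_at_top[of 0] by eventually_elim (simp add: a_lam_eq_infinity False)
  then show ?thesis
    unfolding chem_eq_infinity[OF False] by (rule Lim_transform_eventually[OF tendsto_const])
qed

subsection \<open>Translations of the environment\<close>

definition translate_edge :: "'d::finite site \<Rightarrow> 'd edge \<Rightarrow> 'd edge" where
  "translate_edge v e = (\<lambda>x. x + v) ` e"

definition shift_weights :: "'d::finite site \<Rightarrow> ('d edge \<Rightarrow> real) \<Rightarrow> 'd edge \<Rightarrow> real" where
  "shift_weights v u = (\<lambda>e\<in>Edges. u (translate_edge v e))"

lemma translate_edge_in_Edges:
  assumes "e \<in> Edges"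
  shows "translate_edge v e \<in> Edges"
proof -
  obtain x y where "e = {x, y}" "l1 (x - y) = 1" using assms unfolding Edges_def by blast
  then show ?thesis by (simp add: translate_edge_def Edges_iff)
qed

lemma inj_translate_edge: "inj_on (translate_edge v) A"
  by (rule inj_on_inverseI[where g = "translate_edge (- v)"]) (auto simp: translate_edge_def image_image)

lemma adj_shift_weights:
  "adj (omega (shift_weights v u) p) x y \<longleftrightarrow> adj (omega u p) (x + v) (y + v)"
  by (auto simp: adj_def omega_def shift_weights_def translate_edge_def Edges_iff)

lemma relpowp_translate:
  fixes v :: "'a::ab_group_add"
  assumes "\<And>a b. R a b \<longleftrightarrow> Q (a + v) (b + v)"
  shows "(R ^^ n) a b \<longleftrightarrow> (Q ^^ n) (a + v) (b + v)"
proof (induction n arbitrary: b)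
  case (Suc n)
  show ?case
  proof
    assume "(R ^^ Suc n) a b"
    then obtain z where "(R ^^ n) a z" "R z b" by (rule relpowp_Suc_E)
    then show "(Q ^^ Suc n) (a + v) (b + v)"
      using Suc.IH assms by (blast intro: relpowp_Suc_I)
  next
    assume "(Q ^^ Suc n) (a + v) (b + v)"
    then obtain z where z: "(Q ^^ n) (a + v) z" "Q z (b + v)" by (rule relpowp_Suc_E)
    then have "(R ^^ n) a (z - v)" "R (z - v) b"
      using Suc.IH[of "z - v"] assms[of "z - v" b] by simp_all
    then show "(R ^^ Suc n) a b" by (rule relpowp_Suc_I)
  qed
qed simp

lemma infinite_translate_iff:
  fixes v :: "'a::ab_group_add"
  shows "infinite {y. P (y + v)} \<longleftrightarrow> infinite {y. P y}"
proof -
  have "{y. P (y + v)} = (\<lambda>y. y - v) ` {y. P y}"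
    by (auto simp: image_iff) (metis add_diff_cancel)
  moreover have "inj (\<lambda>y::'a. y - v)" by (simp add: inj_on_def)
  ultimately show ?thesis by (simp add: finite_image_iff inj_on_subset)
qed

lemma Cinf_shift_weights: "x \<in> Cinf (omega (shift_weights v u) p) \<longleftrightarrow> x + v \<in> Cinf (omega u p)"
proof -
  have "connected (omega (shift_weights v u) p) x y \<longleftrightarrow> connected (omega u p) (x + v) (y + v)" for y
    unfolding connected_iff_relpowp
    using relpowp_translate[of "adj (omega (shift_weights v u) p)", OF adj_shift_weights] by blast
  then have "{y. connected (omega (shift_weights v u) p) x y} = {y. connected (omega u p) (x + v) (y + v)}"
    by simp
  then show ?thesis
    unfolding Cinf_def using infinite_translate_iff[of "connected (omega u p) (x + v)"] by simp
qed

lemma Cinf_restrict_Edges: "Cinf (omega (restrict u Edges) p) = Cinf (omega u p)"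
proof -
  have "adj (omega (restrict u Edges) p) = adj (omega u p)"
    unfolding adj_def omega_def by auto
  then show ?thesis unfolding Cinf_def connected_def by simp
qed

subsection \<open>Measurability of the infinite cluster\<close>

lemma finite_l1_ball: "finite {y :: 'd::finite site. l1 y \<le> N}"
proof -
  have "{y :: 'd site. l1 y \<le> N} \<subseteq> vec_lambda ` (Pi\<^sub>E UNIV (\<lambda>_. {-N..N}))"
  proof
    fix y :: "'d site" assume "y \<in> {y. l1 y \<le> N}"
    then have "\<bar>y $ i\<bar> \<le> N" for i using abs_component_le_l1[of y i] by simp
    then have "vec_nth y \<in> Pi\<^sub>E UNIV (\<lambda>_. {-N..N})"
      by (auto simp: PiE_UNIV_domain abs_le_iff minus_le_iff)
    then show "y \<in> vec_lambda ` (Pi\<^sub>E UNIV (\<lambda>_. {-N..N}))" by force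
  qed
  then show ?thesis by (rule finite_subset) (intro finite_imageI finite_PiE, auto)
qed

lemma infinite_iff_l1_unbounded:
  "infinite (S :: 'd::finite site set) \<longleftrightarrow> (\<forall>n::nat. \<exists>y\<in>S. int n < l1 y)"
proof
  assume "infinite S"
  show "\<forall>n::nat. \<exists>y\<in>S. int n < l1 y"
  proof (rule ccontr)
    assume "\<not> (\<forall>n::nat. \<exists>y\<in>S. int n < l1 y)"
    then obtain n :: nat where "S \<subseteq> {y. l1 y \<le> int n}" by (auto simp: not_less)
    with \<open>infinite S\<close> finite_l1_ball show False by (metis finite_subset)
  qed
next
  assume unbounded: "\<forall>n::nat. \<exists>y\<in>S. int n < l1 y"
  show "infinite S"
  proof
    assume "finite S"
    obtain y where "y \<in> S" "int (nat (Max (l1 ` S))) < l1 y" using unbounded by blast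
    moreover from \<open>y \<in> S\<close> \<open>finite S\<close> have "l1 y \<le> Max (l1 ` S)" by simp
    ultimately show False by linarith
  qed
qed

abbreviation weight_space :: "('d::finite edge \<Rightarrow> real) measure" where
  "weight_space \<equiv> Pi\<^sub>M Edges (\<lambda>_. borel)"

lemma measurable_adj: "Measurable.pred weight_space (\<lambda>u. adj (omega u p) x y)"
proof (cases "{x, y} \<in> Edges")
  case True
  then have "(\<lambda>u. u {x, y}) \<in> borel_measurable weight_space"
    by (rule measurable_component_singleton)
  then show ?thesis using True unfolding adj_def omega_def by measurable
qed (simp add: adj_def)

lemma measurable_relpowp_adj: "Measurable.pred weight_space (\<lambda>u. (adj (omega u p) ^^ n) x y)"
proof (induction n arbitrary: y)
  case (Suc n)
  have "(adj w ^^ Suc n) x y \<longleftrightarrow> (\<exists>z. (adj w ^^ n) x z \<and> adj w z y)" for w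
    by (metis relpowp_Suc_E relpowp_Suc_I)
  then show ?case by (simp only:) (intro pred_intros_countable pred_intros_logic Suc.IH measurable_adj)
qed simp

lemma measurable_Cinf: "Measurable.pred weight_space (\<lambda>u. x \<in> Cinf (omega u p))"
  unfolding Cinf_def connected_iff_relpowp infinite_iff_l1_unbounded
  by (simp only: mem_Collect_eq Bex_def)
     (intro pred_intros_countable pred_intros_logic measurable_relpowp_adj, simp)

lemma measure_zero_if_AE_not:
  assumes "AE s in M. \<not> P s"
  shows "measure M {s \<in> space M. P s} = 0"
proof (cases "{s \<in> space M. P s} \<in> sets M")
  case True
  with assms have "emeasure M {s \<in> space M. P s} = 0" by (simp add: AE_iff_measurable)
  then show ?thesis by (simp add: measure_def)
qed (rule measure_notin_sets)

lemma obtain_AE_in_pos_measure: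
  assumes "0 < measure M {s \<in> space M. P s}" "AE s in M. Q s"
  obtains s where "s \<in> space M" "P s" "Q s"
proof (rule ccontr)
  assume "\<not> thesis"
  have "AE s in M. \<not> P s"
    using assms(2) by (rule AE_mp) (use that \<open>\<not> thesis\<close> in \<open>intro AE_I2, blast\<close>)
  then show False using assms(1) by (simp add: measure_zero_if_AE_not)
qed

lemma (in prob_space) infinitely_often_eq_INT_UN:
  assumes "\<And>j. B j \<in> events"
  shows "{x \<in> space M. infinite {j::nat. x \<in> B j}} = (\<Inter>m. \<Union>n\<in>{m..}. B n)"
  using sets.sets_into_space[OF assms] by (auto simp: infinite_nat_iff_unbounded_le) blast

lemma (in prob_space) prob_infinitely_often_ge:
  assumes "\<And>j. B j \<in> events" "\<And>j. c \<le> prob (B j)"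
  shows "c \<le> prob {x \<in> space M. infinite {j::nat. x \<in> B j}}"
proof -
  define C where "C m = (\<Union>n\<in>{m..}. B n)" for m
  have C: "C m \<in> events" "B m \<subseteq> C m" for m using assms(1) by (auto simp: C_def)
  have "(\<lambda>m. prob (C m)) \<longlonglongrightarrow> prob (\<Inter> (range C))"
    using C(1) by (intro finite_Lim_measure_decseq) (auto simp: C_def decseq_def intro: le_trans)
  moreover have "c \<le> prob (C m)" for m
    using assms(2)[of m] finite_measure_mono[OF C(2,1), of m] by linarith
  ultimately show ?thesis
    unfolding infinitely_often_eq_INT_UN[OF assms(1)] C_def by (metis LIMSEQ_le_const)
qed

text \<open>Otherwise L would be covered by the null sets B j \<inter> L, although by the previous lemma
  it has probability at least prob (B 0).\<close>

lemma (in prob_space) prob_Int_infinitely_often_pos: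
  assumes events: "\<And>j. B j \<in> events"
    and L: "L = {x \<in> space M. infinite {j::nat. x \<in> B j}}"
    and pos: "0 < prob (B 0)"
    and stationary: "\<And>j. prob (B j) = prob (B 0)" "\<And>j. prob (B j \<inter> L) = prob (B 0 \<inter> L)"
  shows "0 < prob (B 0 \<inter> L)"
proof (rule ccontr)
  assume "\<not> 0 < prob (B 0 \<inter> L)"
  then have "prob (B 0 \<inter> L) = 0" using measure_nonneg[of M "B 0 \<inter> L"] by linarith
  then have zero: "prob (B j \<inter> L) = 0" for j using stationary(2)[of j] by simp
  have L_event: "L \<in> events"
    using events unfolding L infinitely_often_eq_INT_UN[OF events] by auto
  have "B j \<inter> L \<in> null_sets M" for j
    using zero[of j] events L_event by (simp add: null_sets_def emeasure_eq_measure)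
  then have null: "(\<Union>j. B j \<inter> L) \<in> null_sets M" by blast
  have "L \<subseteq> (\<Union>j. B j \<inter> L)" using L by (auto dest: not_finite_existsD)
  then have "prob L = 0"
    by (rule measure_eq_0_null_sets[OF null_sets_subset[OF null L_event]])
  moreover have "prob (B 0) \<le> prob L"
    unfolding L by (rule prob_infinitely_often_ge[OF events], rule eq_refl, rule stationary(1)[symmetric])
  ultimately show False using pos by linarith
qed

lemma infinite_nat_shift_iff: "infinite {k::nat. Q (k + j)} \<longleftrightarrow> infinite {k. Q k}"
  using eventually_sequentially_seg[of "\<lambda>k. \<not> Q k" j]
  by (simp add: frequently_cofinite[symmetric] cofinite_eq_sequentially frequently_def)

lemma Edges_nonempty: "(Edges :: 'd::finite edge set) \<noteq> {}"
proof -
  obtain i :: 'd where True by blast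
  have "(0 - axis i 1 :: 'd site) = axis i (-1)" by (simp add: axis_def vec_eq_iff)
  then have "l1 (0 - axis i 1 :: 'd site) = 1" by (simp add: l1_axis)
  then have "{0, axis i 1} \<in> (Edges :: 'd edge set)" by (simp add: Edges_iff)
  then show ?thesis by blast
qed

abbreviation uniform_weights :: "('d::finite edge \<Rightarrow> real) measure" where
  "uniform_weights \<equiv> Pi\<^sub>M Edges (\<lambda>_. uniform_measure lborel {0<..<1})"

lemma prob_space_uniform_01: "prob_space (uniform_measure lborel {0<..<1::real})"
  by (rule prob_space_uniform_measure) simp_all

lemma prob_space_uniform_weights: "prob_space uniform_weights"
  by (rule prob_space_PiM) (rule prob_space_uniform_01)

lemma sets_uniform_weights: "sets uniform_weights = sets weight_space"
  by (rule sets_PiM_cong) simp_all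

lemma space_uniform_weights: "space uniform_weights = space weight_space"
  by (rule sets_eq_imp_space_eq[OF sets_uniform_weights])

lemma measurable_shift_weights:
  "shift_weights v \<in> measurable (Pi\<^sub>M Edges (\<lambda>_. N)) (Pi\<^sub>M Edges (\<lambda>_. N))"
  unfolding shift_weights_def
  by (rule measurable_restrict) (rule measurable_component_singleton, rule translate_edge_in_Edges)

lemma distr_shift_weights:
  assumes "prob_space N"
  shows "distr (Pi\<^sub>M Edges (\<lambda>_. N)) (Pi\<^sub>M Edges (\<lambda>_. N)) (shift_weights v) = Pi\<^sub>M Edges (\<lambda>_. N)"
  unfolding shift_weights_def
  by (rule distr_PiM_reindex[of Edges "\<lambda>_. N" "translate_edge v" Edges])
     (use assms inj_translate_edge translate_edge_in_Edges in auto)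

lemma law_of_weights:
  assumes "iid_uniform M U"
  shows "(\<lambda>s. restrict (U s) Edges) \<in> measurable M weight_space"
    and "distr M weight_space (\<lambda>s. restrict (U s) Edges) = uniform_weights"
proof -
  interpret prob_space M using assms by (simp add: iid_uniform_def)
  have indep: "indep_vars (\<lambda>_. borel) (\<lambda>e s. U s e) Edges"
    using assms by (simp add: iid_uniform_def)
  then have rv: "random_variable borel (\<lambda>s. U s e)" if "e \<in> Edges" for e
    using that unfolding indep_vars_def2 by simp
  then show "(\<lambda>s. restrict (U s) Edges) \<in> measurable M weight_space"
    by (rule measurable_restrict)
  have "distr M weight_space (\<lambda>s. restrict (U s) Edges)
      = Pi\<^sub>M Edges (\<lambda>e. distr M borel (\<lambda>s. U s e))"
    using indep_vars_iff_distr_eq_PiM'[where X = "\<lambda>e s. U s e" and M' = "\<lambda>_. borel",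
        OF Edges_nonempty rv] indep by simp
  also have "\<dots> = uniform_weights"
    using assms by (intro PiM_cong) (simp_all only: iid_uniform_def)
  finally show "distr M weight_space (\<lambda>s. restrict (U s) Edges) = uniform_weights" .
qed

lemma measure_eq_uniform_weights:
  assumes iid: "iid_uniform M U" and Q: "Measurable.pred weight_space Q"
  shows "measure M {s \<in> space M. Q (restrict (U s) Edges)}
           = measure uniform_weights {u \<in> space uniform_weights. Q u}"
proof -
  have event: "{u \<in> space uniform_weights. Q u} \<in> sets weight_space"
    using Q unfolding space_uniform_weights Measurable.pred_def by simp
  have "(\<lambda>s. restrict (U s) Edges) -` {u \<in> space uniform_weights. Q u} \<inter> space M
      = {s \<in> space M. Q (restrict (U s) Edges)}"
    using measurable_space[OF law_of_weights(1)[OF iid]] by (auto simp: space_uniform_weights)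
  then show ?thesis
    using measure_distr[OF law_of_weights(1)[OF iid] event] by (simp add: law_of_weights(2)[OF iid])
qed

lemma measure_preserving_shift_weights:
  assumes "prob_space N" "A \<in> sets (Pi\<^sub>M Edges (\<lambda>_. N))"
  shows "measure (Pi\<^sub>M Edges (\<lambda>_. N)) (shift_weights v -` A \<inter> space (Pi\<^sub>M Edges (\<lambda>_. N)))
           = measure (Pi\<^sub>M Edges (\<lambda>_. N)) A"
proof -
  have "measure (Pi\<^sub>M Edges (\<lambda>_. N)) A
      = measure (distr (Pi\<^sub>M Edges (\<lambda>_. N)) (Pi\<^sub>M Edges (\<lambda>_. N)) (shift_weights v)) A"
    by (simp only: distr_shift_weights[OF assms(1)])
  also have "\<dots> = measure (Pi\<^sub>M Edges (\<lambda>_. N)) (shift_weights v -` A \<inter> space (Pi\<^sub>M Edges (\<lambda>_. N)))"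
    by (rule measure_distr[OF measurable_shift_weights assms(2)])
  finally show ?thesis ..
qed

text \<open>By translation invariance, the events {k z \<in> C_\<infinity>} (k \<in> \<nat>) form a stationary sequence.\<close>

lemma uniform_weights_origin_and_multiples_in_Cinf_pos:
  fixes z :: "'d::finite site"
  defines "P \<equiv> uniform_weights :: ('d edge \<Rightarrow> real) measure"
  assumes pos: "0 < measure P {u \<in> space P. 0 \<in> Cinf (omega u p)}"
  shows "0 < measure P {u \<in> space P. 0 \<in> Cinf (omega u p)
                          \<and> infinite {k::nat. int k *s z \<in> Cinf (omega u p)}}"
proof -
  interpret P: prob_space P unfolding P_def by (rule prob_space_uniform_weights)
  define B where "B j = {u \<in> space P. int j *s z \<in> Cinf (omega u p)}" for j :: nat
  define L where "L = {u \<in> space P. infinite {k::nat. int k *s z \<in> Cinf (omega u p)}}"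
  have event: "{u \<in> space P. Q u} \<in> P.events" if "Measurable.pred weight_space Q" for Q
    using that unfolding P_def sets_uniform_weights space_uniform_weights Measurable.pred_def by simp
  have B_events: "B j \<in> P.events" for j
    unfolding B_def by (intro event measurable_Cinf)
  have L_event: "L \<in> P.events"
    unfolding L_def infinite_nat_iff_unbounded_le
    by (intro event pred_intros_countable pred_intros_logic measurable_Cinf) simp
  have shift_space: "shift_weights v u \<in> space P" if "u \<in> space P" for v u
    using measurable_space[OF measurable_shift_weights that[unfolded P_def]] by (simp add: P_def)
  have preimage_B: "shift_weights (int j *s z) -` B 0 \<inter> space P = B j" for j
    using shift_space by (auto simp: B_def Cinf_shift_weights)
  have preimage_L: "shift_weights (int j *s z) -` L \<inter> space P = L" for j
  proof -
    have "int k *s z + int j *s z = int (k + j) *s z" for k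
      by simp
    then have "infinite {k. int k *s z \<in> Cinf (omega (shift_weights (int j *s z) u) p)}
        \<longleftrightarrow> infinite {k. int k *s z \<in> Cinf (omega u p)}" for u
      using infinite_nat_shift_iff[of "\<lambda>k. int k *s z \<in> Cinf (omega u p)" j]
      by (simp add: Cinf_shift_weights)
    then show ?thesis using shift_space by (auto simp: L_def)
  qed
  have shift_prob: "P.prob (shift_weights (int j *s z) -` A \<inter> space P) = P.prob A"
    if "A \<in> P.events" for A j
    using measure_preserving_shift_weights[OF prob_space_uniform_01 that[unfolded P_def]]
    by (simp add: P_def)
  have "0 < P.prob (B 0 \<inter> L)"
  proof (rule P.prob_Int_infinitely_often_pos[OF B_events])
    show "L = {u \<in> space P. infinite {j. u \<in> B j}}" by (auto simp: L_def B_def)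
    show "0 < P.prob (B 0)" using pos by (simp add: B_def)
    show "P.prob (B j) = P.prob (B 0)" for j
      using shift_prob[OF B_events[of 0], of j] by (simp add: preimage_B)
    show "P.prob (B j \<inter> L) = P.prob (B 0 \<inter> L)" for j
    proof -
      have "shift_weights (int j *s z) -` (B 0 \<inter> L) \<inter> space P = B j \<inter> L"
        using preimage_B[of j] preimage_L[of j] by blast
      then show ?thesis using shift_prob[of "B 0 \<inter> L" j] B_events[of 0] L_event by simp
    qed
  qed
  moreover have "B 0 \<inter> L = {u \<in> space P. 0 \<in> Cinf (omega u p)
                               \<and> infinite {k::nat. int k *s z \<in> Cinf (omega u p)}}"
    by (auto simp: B_def L_def)
  ultimately show ?thesis by simp
qed

lemma prob_origin_and_multiples_in_Cinf_pos:
  fixes U :: "'a \<Rightarrow> 'd::finite edge \<Rightarrow> real" and z :: "'d site"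
  assumes iid: "iid_uniform M U"
    and pos: "0 < measure M {s \<in> space M. 0 \<in> Cinf (omega (U s) p)}"
  shows "0 < measure M {s \<in> space M. 0 \<in> Cinf (omega (U s) p)
                          \<and> infinite {k::nat. int k *s z \<in> Cinf (omega (U s) p)}}"
proof -
  have pred: "Measurable.pred weight_space
      (\<lambda>u. 0 \<in> Cinf (omega u p) \<and> infinite {k::nat. int k *s z \<in> Cinf (omega u p)})"
    unfolding infinite_nat_iff_unbounded_le
    by (intro pred_intros_countable pred_intros_logic measurable_Cinf) simp
  have "0 < measure (uniform_weights :: ('d edge \<Rightarrow> real) measure)
                {u \<in> space uniform_weights. 0 \<in> Cinf (omega u p)}"
    using pos measure_eq_uniform_weights[OF iid measurable_Cinf[of 0 p]]
    by (simp add: Cinf_restrict_Edges)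
  then have "0 < measure (uniform_weights :: ('d edge \<Rightarrow> real) measure)
                {u \<in> space uniform_weights. 0 \<in> Cinf (omega u p)
                   \<and> infinite {k::nat. int k *s z \<in> Cinf (omega u p)}}"
    by (rule uniform_weights_origin_and_multiples_in_Cinf_pos)
  then show ?thesis
    using measure_eq_uniform_weights[OF iid pred] by (simp add: Cinf_restrict_Edges)
qed

lemma Cinf_has_neighbour:
  assumes "x \<in> Cinf w"
  obtains y where "adj w x y"
proof -
  have "infinite ({y. connected w x y} - {x})" using assms unfolding Cinf_def by simp
  then obtain y where "connected w x y" "y \<noteq> x" using infinite_imp_nonempty by blast
  then show ?thesis using that unfolding connected_def by (metis converse_rtranclpE)
qed

text \<open>With p = 0 no edge is open, since the weights are almost surely at most 1; hence
  p_c \<ge> 0 and the defining set of p_c is nonempty.\<close>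

lemma prob_origin_in_Cinf_pos:
  fixes U :: "'a \<Rightarrow> 'd::finite edge \<Rightarrow> real"
  assumes iid: "iid_uniform M U" and p: "p_crit M U < p" "p \<le> 1"
  shows "0 < measure M {s \<in> space M. 0 \<in> Cinf (omega (U s) p)}"
proof -
  interpret prob_space M using iid by (simp add: iid_uniform_def)
  define S where "S = {p \<in> {0..1}. measure M {s \<in> space M. 0 \<in> Cinf (omega (U s) p)} = 0}"
  have weight_le_1: "AE s in M. U s e \<le> 1" if "e \<in> Edges" for e
  proof -
    have rv: "random_variable borel (\<lambda>s. U s e)"
      using iid that unfolding iid_uniform_def indep_vars_def2 by simp
    have "distr M borel (\<lambda>s. U s e) = uniform_measure lborel {0<..<1}"
      using iid that by (simp add: iid_uniform_def)
    then have "AE x in distr M borel (\<lambda>s. U s e). x \<le> 1"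
      by (simp only:) (rule AE_uniform_measureI, auto)
    then show ?thesis by (rule AE_distrD[OF rv])
  qed
  have "AE s in M. \<forall>y::'d site. {0, y} \<in> Edges \<longrightarrow> U s {0, y} \<le> 1"
    unfolding AE_all_countable using weight_le_1 by (auto intro: AE_I2)
  then have "AE s in M. 0 \<notin> Cinf (omega (U s) 0)"
  proof (rule AE_mp, intro AE_I2 impI notI)
    fix s assume le_1: "\<forall>y. {0, y} \<in> Edges \<longrightarrow> U s {0, y} \<le> 1"
      and origin: "0 \<in> Cinf (omega (U s) 0)"
    from origin obtain y where "adj (omega (U s) 0) 0 y" by (rule Cinf_has_neighbour)
    then have "{0, y} \<in> Edges" "1 < U s {0, y}" by (simp_all add: adj_def omega_def)
    with le_1 show False by (meson not_le)
  qed
  then have "0 \<in> S" unfolding S_def by (simp add: measure_zero_if_AE_not)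
  moreover have "bdd_above S" unfolding S_def by (rule bdd_aboveI[of _ 1]) auto
  ultimately have "0 \<le> p_crit M U"
    unfolding p_crit_def S_def[symmetric] by (rule cSup_upper)
  have "p \<notin> S"
  proof
    assume "p \<in> S"
    then have "p \<le> p_crit M U"
      unfolding p_crit_def S_def[symmetric] using \<open>bdd_above S\<close> by (rule cSup_upper)
    with p show False by simp
  qed
  with \<open>0 \<le> p_crit M U\<close> p show ?thesis by (simp add: S_def order_less_le)
qed

lemma l1_scale: "l1 (int k *s z) = int k * l1 z"
  unfolding l1_def by (simp add: abs_mult sum_distrib_left)

lemma one_le_l1: "z \<noteq> 0 \<Longrightarrow> 1 \<le> l1 (z :: 'd::finite site)"
  using abs_component_le_l1[of z] by (metis vec_eq_iff zero_index zero_less_abs_iff int_one_le_iff_zero_less order_trans)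

lemma to_real_scale: "to_real (int k *s z) = real k *\<^sub>R to_real z"
  by (simp add: to_real_def vec_eq_iff)

lemma is_norm_zero: "is_norm f \<Longrightarrow> f 0 = 0"
  unfolding is_norm_def by simp

lemma is_norm_scale: "is_norm f \<Longrightarrow> 0 \<le> c \<Longrightarrow> f (c *\<^sub>R x) = c * f x"
  unfolding is_norm_def by simp

lemma tendsto_of_eventually_close:
  fixes g :: "'a \<Rightarrow> real"
  assumes "\<And>\<epsilon>. 0 < \<epsilon> \<Longrightarrow> \<forall>\<^sub>F k in F. \<bar>g k - l\<bar> \<le> \<epsilon>"
  shows "(g \<longlongrightarrow> l) F"
proof (rule tendstoI)
  fix e :: real assume "0 < e"
  with assms[of "e / 2"] show "\<forall>\<^sub>F k in F. dist (g k) l < e"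
    by (auto elim: eventually_mono simp: dist_real_def)
qed

lemma inf_principal_not_bot: "infinite (S :: nat set) \<Longrightarrow> sequentially \<sqinter> principal S \<noteq> bot"
  unfolding trivial_limit_def eventually_inf_principal
  using frequently_cofinite[of "\<lambda>k. k \<in> S"] by (simp add: cofinite_eq_sequentially frequently_def)

lemma eventually_inf_principal_sequentially:
  "\<forall>\<^sub>F k in sequentially \<sqinter> principal S. K \<le> k \<and> k \<in> S"
  unfolding eventually_inf_principal eventually_sequentially by auto

subsection \<open>Limits along the multiples of a lattice direction in the infinite cluster\<close>

definition has_lyapunov_limit :: "'d::finite env \<Rightarrow> real \<Rightarrow> (real ^ 'd \<Rightarrow> real) \<Rightarrow> bool" where
  "has_lyapunov_limit w lam \<alpha> \<longleftrightarrow>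
     (\<forall>\<epsilon>>0. \<exists>R. \<forall>x \<in> Cinf w. real_of_int (l1 x) \<ge> R \<longrightarrow>
        \<bar>a_lam lam w 0 x - ereal (\<alpha> (to_real x))\<bar> \<le> ereal (\<epsilon> * real_of_int (l1 x)))"

definition has_time_constant_limit :: "'d::finite env \<Rightarrow> 'd site \<Rightarrow> real \<Rightarrow> bool" where
  "has_time_constant_limit w z m \<longleftrightarrow>
     (\<forall>\<epsilon>>0. \<exists>K. \<forall>k::nat. K \<le> k \<longrightarrow> 0 < k \<longrightarrow> int k *s z \<in> Cinf w \<longrightarrow>
        \<bar>chem w 0 (int k *s z) / ereal (real k) - ereal m\<bar> \<le> ereal \<epsilon>)"

lemma is_lyapunov_iff:
  "is_lyapunov M U p lam \<alpha> \<longleftrightarrow> is_norm \<alpha> \<and>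
     (AE s in M. 0 \<in> Cinf (omega (U s) p) \<longrightarrow> has_lyapunov_limit (omega (U s) p) lam \<alpha>)"
  unfolding is_lyapunov_def has_lyapunov_limit_def ..

lemma is_time_constant_iff:
  "is_time_constant M U p \<mu> \<longleftrightarrow> is_norm \<mu> \<and>
     (\<forall>z. AE s in M. 0 \<in> Cinf (omega (U s) p) \<longrightarrow>
        has_time_constant_limit (omega (U s) p) z (\<mu> (to_real z)))"
  unfolding is_time_constant_def has_time_constant_limit_def vector_scalar_mult_def by simp


lemma graph_dist_multiples_tendsto:
  fixes w :: "'d::finite env" and z :: "'d site"
  defines "F \<equiv> sequentially \<sqinter> principal {k. int k *s z \<in> Cinf w}"
  assumes tc: "has_time_constant_limit w z m"
  shows "\<forall>\<^sub>F k in F. connected w 0 (int k *s z)"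
    and "((\<lambda>k. real (graph_dist w 0 (int k *s z)) / real k) \<longlongrightarrow> m) F"
proof -
  have close: "\<forall>\<^sub>F k in F. connected w 0 (int k *s z)
                  \<and> \<bar>real (graph_dist w 0 (int k *s z)) / real k - m\<bar> \<le> \<epsilon>" if "0 < \<epsilon>" for \<epsilon>
  proof -
    obtain K where K: "\<forall>k::nat. K \<le> k \<longrightarrow> 0 < k \<longrightarrow> int k *s z \<in> Cinf w \<longrightarrow>
        \<bar>chem w 0 (int k *s z) / ereal (real k) - ereal m\<bar> \<le> ereal \<epsilon>"
      using tc \<open>0 < \<epsilon>\<close> unfolding has_time_constant_limit_def by blast
    show ?thesis
      using eventually_inf_principal_sequentially[of "max K 1"] unfolding F_def
    proof eventually_elim
      case (elim k)
      then have bound: "\<bar>chem w 0 (int k *s z) / ereal (real k) - ereal m\<bar> \<le> ereal \<epsilon>"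
        using K by simp
      have "connected w 0 (int k *s z)"
      proof (rule ccontr)
        assume "\<not> connected w 0 (int k *s z)"
        with bound elim show False by (simp add: chem_eq_infinity)
      qed
      with bound elim show ?case by (simp add: chem_eq_graph_dist)
    qed
  qed
  show "\<forall>\<^sub>F k in F. connected w 0 (int k *s z)"
    using close[of 1] by (auto elim: eventually_mono)
  show "((\<lambda>k. real (graph_dist w 0 (int k *s z)) / real k) \<longlongrightarrow> m) F"
  proof (rule tendsto_of_eventually_close)
    fix \<epsilon> :: real assume "0 < \<epsilon>"
    with close show "\<forall>\<^sub>F k in F. \<bar>real (graph_dist w 0 (int k *s z)) / real k - m\<bar> \<le> \<epsilon>"
      by (blast intro: eventually_mono)
  qed
qed

lemma ln_laplace_multiples_tendsto:
  fixes w :: "'d::finite env" and z :: "'d site" and \<alpha> :: "real ^ 'd \<Rightarrow> real"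
  defines "F \<equiv> sequentially \<sqinter> principal {k. int k *s z \<in> Cinf w}"
  assumes "z \<noteq> 0" "0 \<le> lam" "is_norm \<alpha>"
    and lyap: "has_lyapunov_limit w lam \<alpha>"
    and connected: "\<forall>\<^sub>F k in F. connected w 0 (int k *s z)"
  shows "((\<lambda>k. - ln (laplace lam w 0 (int k *s z)) / real k) \<longlongrightarrow> \<alpha> (to_real z)) F"
proof (rule tendsto_of_eventually_close)
  fix \<epsilon> :: real assume "0 < \<epsilon>"
  define N where "N = real_of_int (l1 z)"
  have N: "1 \<le> N" using one_le_l1[OF \<open>z \<noteq> 0\<close>] by (simp add: N_def)
  obtain R where R: "\<forall>x \<in> Cinf w. real_of_int (l1 x) \<ge> R \<longrightarrow>
      \<bar>a_lam lam w 0 x - ereal (\<alpha> (to_real x))\<bar> \<le> ereal (\<epsilon> / N * real_of_int (l1 x))"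
    using lyap \<open>0 < \<epsilon>\<close> N unfolding has_lyapunov_limit_def
    by (meson divide_pos_pos less_le_trans zero_less_one)
  show "\<forall>\<^sub>F k in F. \<bar>- ln (laplace lam w 0 (int k *s z)) / real k - \<alpha> (to_real z)\<bar> \<le> \<epsilon>"
    using eventually_conj[OF connected[unfolded F_def] eventually_inf_principal_sequentially[of "max (nat \<lceil>R\<rceil>) 1"]]
    unfolding F_def
  proof eventually_elim
    case (elim k)
    then have k: "1 \<le> real k" "R \<le> real k" by (auto simp: max_def split: if_splits; linarith)+
    have l1: "real_of_int (l1 (int k *s z)) = real k * N" by (simp add: l1_scale N_def)
    have "R \<le> real_of_int (l1 (int k *s z))" using k N unfolding l1 by (smt (verit) mult_le_cancel_left1)
    with R elim have "\<bar>- ln (laplace lam w 0 (int k *s z)) - real k * \<alpha> (to_real z)\<bar> \<le> \<epsilon> * real k"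
      using N \<open>0 \<le> lam\<close> \<open>is_norm \<alpha>\<close>
      by (auto simp: a_lam_eq_ln_laplace l1 to_real_scale is_norm_scale)
    then show ?case using k by (simp add: abs_divide field_simps)
  qed
qed

lemma norm_bounds_of_multiples_in_Cinf:
  fixes w :: "'d::finite env" and z :: "'d site" and \<alpha>1 \<alpha>2 :: "real ^ 'd \<Rightarrow> real"
  assumes infinite: "infinite {k. int k *s z \<in> Cinf w}" and "z \<noteq> 0" "0 < la" "la \<le> lb"
    and norms: "is_norm \<alpha>1" "is_norm \<alpha>2"
    and tc: "has_time_constant_limit w z m"
    and lyap: "has_lyapunov_limit w la \<alpha>1" "has_lyapunov_limit w lb \<alpha>2"
  shows "la * m \<le> \<alpha>1 (to_real z)"
    and "\<alpha>1 (to_real z) \<le> (la + ln (2 * real CARD('d))) * m"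
    and "\<alpha>2 (to_real z) / lb \<le> \<alpha>1 (to_real z) / la"
proof -
  define F where "F = sequentially \<sqinter> principal {k. int k *s z \<in> Cinf w}"
  have F: "F \<noteq> bot" unfolding F_def by (rule inf_principal_not_bot[OF infinite])
  let ?d = "\<lambda>k. real (graph_dist w 0 (int k *s z)) / real k"
  let ?c = "\<lambda>lam k. - ln (laplace lam w 0 (int k *s z)) / real k"
  let ?C = "ln (2 * real CARD('d))"
  have conn: "\<forall>\<^sub>F k in F. connected w 0 (int k *s z)" and d: "(?d \<longlongrightarrow> m) F"
    using graph_dist_multiples_tendsto[OF tc] by (simp_all add: F_def)
  have c1: "(?c la \<longlongrightarrow> \<alpha>1 (to_real z)) F"
    using ln_laplace_multiples_tendsto[OF \<open>z \<noteq> 0\<close> _ norms(1) lyap(1)] conn \<open>0 < la\<close>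
    by (simp add: F_def)
  have c2: "(?c lb \<longlongrightarrow> \<alpha>2 (to_real z)) F"
    using ln_laplace_multiples_tendsto[OF \<open>z \<noteq> 0\<close> _ norms(2) lyap(2)] conn \<open>0 < la\<close> \<open>la \<le> lb\<close>
    by (simp add: F_def)
  have bounds: "\<forall>\<^sub>F k in F. la * ?d k \<le> ?c la k \<and> ?c la k \<le> (la + ?C) * ?d k
                              \<and> ?c lb k / lb \<le> ?c la k / la"
    using conn
  proof eventually_elim
    case (elim k)
    note bounds = ln_laplace_bounds(2,3)[of la w 0 "int k *s z"]
      and antimono = ln_laplace_div_antimono[OF \<open>0 < la\<close> \<open>la \<le> lb\<close> elim]
    show ?case
      using divide_right_mono[OF bounds(1), of "real k"] divide_right_mono[OF bounds(2), of "real k"]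
        divide_right_mono[OF antimono, of "real k"] elim \<open>0 < la\<close>
      by (simp add: field_simps)
  qed
  show "la * m \<le> \<alpha>1 (to_real z)"
    using bounds by (intro tendsto_le[OF F c1 tendsto_mult_left[OF d]]) (auto elim: eventually_mono)
  show "\<alpha>1 (to_real z) \<le> (la + ?C) * m"
    using bounds by (intro tendsto_le[OF F tendsto_mult_left[OF d] c1]) (auto elim: eventually_mono)
  show "\<alpha>2 (to_real z) / lb \<le> \<alpha>1 (to_real z) / la"
    using bounds \<open>0 < la\<close> \<open>la \<le> lb\<close>
    by (intro tendsto_le[OF F tendsto_divide[OF c1 tendsto_const] tendsto_divide[OF c2 tendsto_const]])
      (auto elim: eventually_mono)
qed

lemma obtain_environment_with_limits:
  fixes U :: "'a \<Rightarrow> 'd::finite edge \<Rightarrow> real" and z :: "'d site"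
  assumes iid: "iid_uniform M U" and p: "p_crit M U < p" "p \<le> 1"
    and lyap: "\<forall>lam>0. is_lyapunov M U p lam (\<alpha> lam)"
    and tc: "is_time_constant M U p \<mu>"
    and lam: "0 < la" "0 < lb"
  obtains w where "infinite {k::nat. int k *s z \<in> Cinf w}"
    "has_time_constant_limit w z (\<mu> (to_real z))"
    "has_lyapunov_limit w la (\<alpha> la)" "has_lyapunov_limit w lb (\<alpha> lb)"
proof -
  have lyap_AE: "AE s in M. 0 \<in> Cinf (omega (U s) p) \<longrightarrow>
      has_lyapunov_limit (omega (U s) p) lam (\<alpha> lam)" if "0 < lam" for lam
    using lyap that by (simp add: is_lyapunov_iff)
  have "AE s in M. 0 \<in> Cinf (omega (U s) p) \<longrightarrow>
      has_time_constant_limit (omega (U s) p) z (\<mu> (to_real z))"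
    using tc by (simp add: is_time_constant_iff)
  then have ae: "AE s in M. 0 \<in> Cinf (omega (U s) p) \<longrightarrow>
      has_time_constant_limit (omega (U s) p) z (\<mu> (to_real z))
      \<and> has_lyapunov_limit (omega (U s) p) la (\<alpha> la)
      \<and> has_lyapunov_limit (omega (U s) p) lb (\<alpha> lb)"
    using lyap_AE[OF lam(1)] lyap_AE[OF lam(2)] by eventually_elim blast
  have pos: "0 < measure M {s \<in> space M. 0 \<in> Cinf (omega (U s) p)
                        \<and> infinite {k::nat. int k *s z \<in> Cinf (omega (U s) p)}}"
    by (intro prob_origin_and_multiples_in_Cinf_pos prob_origin_in_Cinf_pos iid p)
  show thesis using obtain_AE_in_pos_measure[OF pos ae] that by blast
qed

lemma lyapunov_bounds_at_lattice_points:
  fixes U :: "'a \<Rightarrow> 'd::finite edge \<Rightarrow> real" and z :: "'d site"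
  assumes iid: "iid_uniform M U" and p: "p_crit M U < p" "p \<le> 1"
    and lyap: "\<forall>lam>0. is_lyapunov M U p lam (\<alpha> lam)"
    and tc: "is_time_constant M U p \<mu>"
    and lam: "0 < la" "la \<le> lb" and "z \<noteq> 0"
  shows "la * \<mu> (to_real z) \<le> \<alpha> la (to_real z)"
    and "\<alpha> la (to_real z) \<le> (la + ln (2 * real CARD('d))) * \<mu> (to_real z)"
    and "\<alpha> lb (to_real z) / lb \<le> \<alpha> la (to_real z) / la"
proof -
  have norms: "is_norm (\<alpha> la)" "is_norm (\<alpha> lb)"
    using lyap lam by (auto simp: is_lyapunov_iff)
  obtain w where "infinite {k::nat. int k *s z \<in> Cinf w}"
      "has_time_constant_limit w z (\<mu> (to_real z))"
      "has_lyapunov_limit w la (\<alpha> la)" "has_lyapunov_limit w lb (\<alpha> lb)"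
    using obtain_environment_with_limits[OF iid p lyap tc lam(1) order_less_le_trans[OF lam]] .
  then show "la * \<mu> (to_real z) \<le> \<alpha> la (to_real z)"
    and "\<alpha> la (to_real z) \<le> (la + ln (2 * real CARD('d))) * \<mu> (to_real z)"
    and "\<alpha> lb (to_real z) / lb \<le> \<alpha> la (to_real z) / la"
    using norm_bounds_of_multiples_in_Cinf[OF _ \<open>z \<noteq> 0\<close> lam norms] by blast+
qed

subsection \<open>From lattice points to R^d\<close>

lemma is_norm_continuous: "is_norm f \<Longrightarrow> continuous_on UNIV f"
proof (rule convex_on_continuous[OF open_UNIV])
  assume f: "is_norm f"
  show "convex_on UNIV f"
  proof (rule convex_onI)
    fix t :: real and x y assume "0 < t" "t < 1"
    then have "f ((1 - t) *\<^sub>R x + t *\<^sub>R y) \<le> f ((1 - t) *\<^sub>R x) + f (t *\<^sub>R y)"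
      using f unfolding is_norm_def by blast
    also have "\<dots> = (1 - t) * f x + t * f y" using f \<open>t < 1\<close> \<open>0 < t\<close> by (simp add: is_norm_scale)
    finally show "f ((1 - t) *\<^sub>R x + t *\<^sub>R y) \<le> (1 - t) * f x + t * f y" .
  qed (rule convex_UNIV)
qed

lemma tendsto_floor_scaled: "(\<lambda>n. real_of_int \<lfloor>real (Suc n) * t\<rfloor> / real (Suc n)) \<longlonglongrightarrow> t"
proof (rule tendsto_sandwich)
  show "\<forall>\<^sub>F n in sequentially. t - inverse (real (Suc n)) \<le> real_of_int \<lfloor>real (Suc n) * t\<rfloor> / real (Suc n)"
  proof (rule always_eventually, rule allI)
    fix n
    have "real (Suc n) * t - 1 \<le> real_of_int \<lfloor>real (Suc n) * t\<rfloor>" by linarith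
    then have "(real (Suc n) * t - 1) / real (Suc n) \<le> real_of_int \<lfloor>real (Suc n) * t\<rfloor> / real (Suc n)"
      by (rule divide_right_mono) simp
    moreover have "t - inverse (real (Suc n)) = (real (Suc n) * t - 1) / real (Suc n)"
      by (simp add: field_simps del: of_nat_Suc)
    ultimately show "t - inverse (real (Suc n)) \<le> real_of_int \<lfloor>real (Suc n) * t\<rfloor> / real (Suc n)"
      by simp
  qed
  show "\<forall>\<^sub>F n in sequentially. real_of_int \<lfloor>real (Suc n) * t\<rfloor> / real (Suc n) \<le> t"
  proof (rule always_eventually, rule allI)
    fix n
    have "real_of_int \<lfloor>real (Suc n) * t\<rfloor> \<le> real (Suc n) * t" by linarith
    then have "real_of_int \<lfloor>real (Suc n) * t\<rfloor> / real (Suc n) \<le> real (Suc n) * t / real (Suc n)"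
      by (rule divide_right_mono) simp
    then show "real_of_int \<lfloor>real (Suc n) * t\<rfloor> / real (Suc n) \<le> t"
      by (simp del: of_nat_Suc)
  qed
  show "(\<lambda>n. t - inverse (real (Suc n))) \<longlonglongrightarrow> t"
    using tendsto_diff[OF tendsto_const LIMSEQ_inverse_real_of_nat] by simp
qed simp

text \<open>x is the limit of the rescaled lattice points \<lfloor>n x\<rfloor>/n, and norms are continuous
  and positively homogeneous.\<close>

lemma norm_le_from_lattice:
  fixes f g :: "real ^ 'd::finite \<Rightarrow> real"
  assumes f: "is_norm f" and g: "is_norm g"
    and lattice: "\<And>z. z \<noteq> 0 \<Longrightarrow> a * f (to_real z) \<le> b * g (to_real z)"
  shows "a * f x \<le> b * g x"
proof -
  define xs where "xs n = (1 / real (Suc n)) *\<^sub>R to_real (\<chi> i. \<lfloor>real (Suc n) * x $ i\<rfloor> :: 'd site)"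
    for n
  have "xs n $ i = real_of_int \<lfloor>real (Suc n) * x $ i\<rfloor> / real (Suc n)" for n i
    by (simp add: xs_def to_real_def)
  then have xs: "xs \<longlonglongrightarrow> x"
    by (intro vec_tendstoI) (simp only: tendsto_floor_scaled)
  have "(\<lambda>n. f (xs n)) \<longlonglongrightarrow> f x" "(\<lambda>n. g (xs n)) \<longlonglongrightarrow> g x"
    by (rule continuous_on_tendsto_compose[OF is_norm_continuous[OF f] xs], simp_all)
       (rule continuous_on_tendsto_compose[OF is_norm_continuous[OF g] xs], simp_all)
  then have lim: "(\<lambda>n. a * f (xs n)) \<longlonglongrightarrow> a * f x" "(\<lambda>n. b * g (xs n)) \<longlonglongrightarrow> b * g x"
    by (auto intro: tendsto_mult_left)
  have le: "a * f (xs n) \<le> b * g (xs n)" for n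
  proof -
    define c where "c = 1 / real (Suc n)"
    have "a * f (xs n) = c * (a * f (to_real (\<chi> i. \<lfloor>real (Suc n) * x $ i\<rfloor>)))"
      using f by (simp add: xs_def is_norm_scale c_def[symmetric] c_def)
    also have "\<dots> \<le> c * (b * g (to_real (\<chi> i. \<lfloor>real (Suc n) * x $ i\<rfloor>)))"
    proof (cases "(\<chi> i. \<lfloor>real (Suc n) * x $ i\<rfloor>) = (0 :: 'd site)")
      case True
      then have "to_real (\<chi> i. \<lfloor>real (Suc n) * x $ i\<rfloor> :: 'd site) = 0"
        by (simp add: to_real_def vec_eq_iff)
      then show ?thesis using f g by (simp add: is_norm_zero)
    next
      case False
      then show ?thesis using lattice by (intro mult_left_mono) (simp_all add: c_def)
    qed
    also have "\<dots> = b * g (xs n)"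
      using g by (simp add: xs_def is_norm_scale c_def)
    finally show ?thesis .
  qed
  show ?thesis
    by (rule tendsto_le[OF trivial_limit_sequentially lim(2,1)]) (simp add: le)
qed

theorem mainTheorem11:
  fixes M :: "'a measure"
    and U :: "'a \<Rightarrow> 'd::finite edge \<Rightarrow> real"
    and tb :: "'d site \<Rightarrow> 'd site set \<Rightarrow> 'd site"
    and p q :: real
    and \<alpha> :: "real \<Rightarrow> real ^ 'd \<Rightarrow> real"
    and \<mu> :: "real ^ 'd \<Rightarrow> real"
  assumes dim: "CARD('d) \<ge> 2"
    and iid: "iid_uniform M U"
    and tiebreak: "\<forall>x S. finite S \<and> S \<noteq> {} \<longrightarrow> tb x S \<in> S"
    and pq: "p_crit M U < q" "q \<le> p" "p \<le> 1"
    and lyap: "\<forall>lam>0. is_lyapunov M U p lam (\<alpha> lam)"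
    and tc: "is_time_constant M U p \<mu>"
  shows "(\<forall>x y :: 'd site. AE s in M.
            (\<forall>lam1 lam2. 0 < lam1 \<longrightarrow> lam1 \<le> lam2 \<longrightarrow>
               a_q tb (U s) q p lam2 x y / ereal lam2 \<le> a_q tb (U s) q p lam1 x y / ereal lam1)
          \<and> ((\<lambda>lam. a_q tb (U s) q p lam x y / ereal lam)
               \<longlongrightarrow> chem (omega (U s) p) (closest tb (omega (U s) q) x)
                                           (closest tb (omega (U s) q) y)) at_top)
      \<and> (\<forall>x :: real ^ 'd.
            (\<forall>lam1 lam2. 0 < lam1 \<longrightarrow> lam1 \<le> lam2 \<longrightarrow> \<alpha> lam2 x / lam2 \<le> \<alpha> lam1 x / lam1)
          \<and> ((\<lambda>lam. \<alpha> lam x / lam) \<longlongrightarrow> \<mu> x) at_top)"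
proof -
  let ?C = "ln (2 * real CARD('d))"
  have norms: "is_norm \<mu>" "\<And>lam. 0 < lam \<Longrightarrow> is_norm (\<alpha> lam)"
    using tc lyap by (auto simp: is_time_constant_iff is_lyapunov_iff)
  note lattice = lyapunov_bounds_at_lattice_points[OF iid order_less_le_trans[OF pq(1,2)] pq(3) lyap tc]
  have bounds: "lam * \<mu> x \<le> \<alpha> lam x" "\<alpha> lam x \<le> (lam + ?C) * \<mu> x" if "0 < lam" for lam x
    using norm_le_from_lattice[OF norms(1) norms(2)[OF that], of lam 1]
      norm_le_from_lattice[OF norms(2)[OF that] norms(1), of 1 "lam + ?C"]
      lattice(1,2)[OF that order_refl] by simp_all
  have antimono: "\<alpha> lb x / lb \<le> \<alpha> la x / la" if "0 < la" "la \<le> lb" for la lb x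
    using norm_le_from_lattice[OF norms(2)[OF order_less_le_trans[OF that]] norms(2)[OF that(1)],
        of "1 / lb" "1 / la" x]
      lattice(3)[OF that] by simp
  show ?thesis
    using a_lam_div_antimono a_lam_div_tendsto_chem antimono
      tendsto_div_at_top_of_affine_bounds[OF bounds]
    by (auto simp: a_q_def intro!: AE_I2)
qed

end
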